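(* Assume (H_coerc), (H_norm), (H_only-min). There exist $\delta_{Ham}>0$ and $\delta_{Lag}>0$ such that, for every solution $u:\mathbb R\to\mathbb R^n$ of $\mathcal Du''=\nabla V(u)$ defined on all of $\mathbb R$ whose Hamiltonian $\frac12|u'|_{\mathcal D}^2-V(u)$ lies in $[-\delta_{Ham},\delta_{Ham}]$, and for every $x_0\in\mathbb R$: if $[x_0,x_0+1]\cap\Sigma_{Esc}[u]\ne\emptyset$ then $\int_{x_0}^{x_0+1}\bigl(\frac12|u'(x)|_{\mathcal D}^2+V(u(x))\bigr)dx\ge\delta_{Lag}$.
   Context: $n\ge1$; $\mathcal D$ a fixed $n\times n$ real symmetric positive definite matrix; $|v|_{\mathcal D}=\sqrt{v\cdot\mathcal Dv}$; $V:\mathbb R^n\to\mathbb R$ of class $C^k$, $k\ge2$. (H_coerc) $\lim_{R\to\infty}\inf_{|u|\ge R}u\cdot\nabla V(u)/|u|^2>0$. (H_norm) $V$ has a nondegenerate minimum point in $V^{-1}(\{0\})$. (H_only-min) every critical point of $V$ in $V^{-1}(\{0\})$ has positive definite Hessian. $\mathcal M_0$ = critical points of $V$ in $V^{-1}(\{0\})$. Let $\lambda_{\min}$ ($\lambda_{\max}$) be the minimum (maximum) eigenvalue among all $D^2V(m)$, $m\in\mathcal M_0$; $d_{Esc}>0$ is fixed small enough that for every $m\in\mathcal M_0$ and $|u-m|_{\mathcal D}\le d_{Esc}$, all eigenvalues of $D^2V(u)$ lie in $[\lambda_{\min}/2,2\lambda_{\max}]$. $\Sigma_{Esc}[u]=\{x\in\mathbb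 R:|u(x)-m|_{\mathcal D}>d_{Esc}\text{ for all }m\in\mathcal M_0\}$. *)

theory Defs
  imports "HOL-Analysis.Analysis" "HOL-Library.Extended_Real"
begin

definition normD :: "real^'n^'n \<Rightarrow> real^'n \<Rightarrow> real" where
  "normD D v = sqrt (v \<bullet> (D *v v))"

definition pos_def_mat :: "real^'n^'n \<Rightarrow> bool" where
  "pos_def_mat A \<longleftrightarrow> (\<forall>v. v \<noteq> 0 \<longrightarrow> 0 < v \<bullet> (A *v v))"

definition mat_eigenvalues :: "real^'n^'n \<Rightarrow> real set" where
  "mat_eigenvalues A = {l. \<exists>v. v \<noteq> 0 \<and> A *v v = l *s v}"

definition C2_with :: "(real^'n \<Rightarrow> real) \<Rightarrow> (real^'n \<Rightarrow> real^'n) \<Rightarrow> (real^'n \<Rightarrow> real^'n^'n) \<Rightarrow> bool" where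
  "C2_with V gradV HessV \<longleftrightarrow>
     (\<forall>u. (V has_derivative (\<lambda>h. gradV u \<bullet> h)) (at u)) \<and>
     (\<forall>u. (gradV has_derivative (\<lambda>h. HessV u *v h)) (at u)) \<and>
     continuous_on UNIV HessV"

definition H_coerc :: "(real^'n \<Rightarrow> real^'n) \<Rightarrow> bool" where
  "H_coerc gradV \<longleftrightarrow> (\<exists>L::ereal. L > 0 \<and>
     ((\<lambda>R::real. INF u\<in>{u. norm u \<ge> R}. ereal (u \<bullet> gradV u / (norm u)\<^sup>2)) \<longlongrightarrow> L) at_top)"

definition M0 :: "(real^'n \<Rightarrow> real) \<Rightarrow> (real^'n \<Rightarrow> real^'n) \<Rightarrow> (real^'n) set" where
  "M0 V gradV = {m. V m = 0 \<and> gradV m = 0}"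

definition H_norm :: "(real^'n \<Rightarrow> real) \<Rightarrow> (real^'n \<Rightarrow> real^'n^'n) \<Rightarrow> bool" where
  "H_norm V HessV \<longleftrightarrow> (\<exists>m. V m = 0 \<and> (\<forall>\<^sub>F u in at m. V m \<le> V u) \<and> invertible (HessV m))"

definition H_only_min :: "(real^'n \<Rightarrow> real) \<Rightarrow> (real^'n \<Rightarrow> real^'n) \<Rightarrow> (real^'n \<Rightarrow> real^'n^'n) \<Rightarrow> bool" where
  "H_only_min V gradV HessV \<longleftrightarrow> (\<forall>m\<in>M0 V gradV. pos_def_mat (HessV m))"

definition lambda_min :: "(real^'n \<Rightarrow> real) \<Rightarrow> (real^'n \<Rightarrow> real^'n) \<Rightarrow> (real^'n \<Rightarrow> real^'n^'n) \<Rightarrow> real" where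
  "lambda_min V gradV HessV = Inf (\<Union>m\<in>M0 V gradV. mat_eigenvalues (HessV m))"

definition lambda_max :: "(real^'n \<Rightarrow> real) \<Rightarrow> (real^'n \<Rightarrow> real^'n) \<Rightarrow> (real^'n \<Rightarrow> real^'n^'n) \<Rightarrow> real" where
  "lambda_max V gradV HessV = Sup (\<Union>m\<in>M0 V gradV. mat_eigenvalues (HessV m))"

definition d_Esc_ok :: "real^'n^'n \<Rightarrow> (real^'n \<Rightarrow> real) \<Rightarrow> (real^'n \<Rightarrow> real^'n) \<Rightarrow> (real^'n \<Rightarrow> real^'n^'n) \<Rightarrow> real \<Rightarrow> bool" where
  "d_Esc_ok D V gradV HessV d \<longleftrightarrow> d > 0 \<and>
     (\<forall>m\<in>M0 V gradV. \<forall>u. normD D (u - m) \<le> d \<longrightarrow>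
        mat_eigenvalues (HessV u) \<subseteq> {lambda_min V gradV HessV / 2 .. 2 * lambda_max V gradV HessV})"

definition Sigma_Esc :: "real^'n^'n \<Rightarrow> (real^'n \<Rightarrow> real) \<Rightarrow> (real^'n \<Rightarrow> real^'n) \<Rightarrow> real \<Rightarrow> (real \<Rightarrow> real^'n) \<Rightarrow> real set" where
  "Sigma_Esc D V gradV d u = {x. \<forall>m\<in>M0 V gradV. normD D (u x - m) > d}"

end

theory Submission
  imports Defs
begin

text \<open>
  If both the action of u on [x0, x0+1] and the Hamiltonian are below a small \<delta>, then the
  integral of |u'|^2 over the interval is small, so u hardly moves there, while V(u) < \<delta>
  somewhere; coercivity thus confines u to a fixed compact set, on which V and \<nabla>V are
  uniformly continuous. Hence V(u) is small on the whole interval, so by the Hamiltonian bound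
  |u'| is small, so u'' = D^-1 \<nabla>V(u) is nearly constant; as u' is small at both ends,
  \<nabla>V(u) is small too. By compactness, a point where V and \<nabla>V are both small lies close
  to M0, so the interval cannot meet \<Sigma>_Esc. Only positive definiteness of D, continuity
  of \<nabla>V, (H_coerc) and d_Esc > 0 are needed.
\<close>

lemma quadratic_form_lower_bound:
  fixes D :: "real^'n^'n"
  assumes "pos_def_mat D"
  obtains a where "a > 0" "\<And>v. a * (norm v)\<^sup>2 \<le> v \<bullet> (D *v v)"
proof -
  have cont: "continuous_on (sphere 0 1) (\<lambda>v::real^'n. v \<bullet> (D *v v))"
    by (intro continuous_intros linear_continuous_on matrix_vector_mul_bounded_linear)
  obtain v0 :: "real^'n" where v0: "norm v0 = 1" "\<And>v. norm v = 1 \<Longrightarrow> v0 \<bullet> (D *v v0) \<le> v \<bullet> (D *v v)"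
    using continuous_attains_inf[OF compact_sphere _ cont] by force
  have pos: "v0 \<bullet> (D *v v0) > 0"
    using assms v0(1) unfolding pos_def_mat_def by (metis norm_zero zero_neq_one)
  have "v0 \<bullet> (D *v v0) * (norm v)\<^sup>2 \<le> v \<bullet> (D *v v)" for v :: "real^'n"
  proof (cases "v = 0")
    case False
    have "v0 \<bullet> (D *v v0) \<le> (v /\<^sub>R norm v) \<bullet> (D *v (v /\<^sub>R norm v))"
      by (rule v0(2)) (use False in simp)
    also have "\<dots> = (v \<bullet> (D *v v)) / (norm v)\<^sup>2"
      by (simp add: matrix_vector_mult_scaleR power2_eq_square divide_inverse)
    finally show ?thesis using False by (simp add: field_simps)
  qed simp
  with pos show thesis by (rule that)
qed

lemma normD_square:
  "pos_def_mat D \<Longrightarrow> (normD D v)\<^sup>2 = v \<bullet> (D *v v)"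
  unfolding normD_def pos_def_mat_def by (cases "v = 0") (auto intro: less_imp_le)

lemma continuous_on_normD: "continuous_on S (normD D)"
  unfolding normD_def
  by (intro continuous_intros linear_continuous_on matrix_vector_mul_bounded_linear)

lemma normD_le_norm:
  fixes D :: "real^'n^'n"
  assumes "pos_def_mat D" "\<And>v. norm (D *v v) \<le> norm v * b"
  shows "normD D v \<le> sqrt b * norm v"
proof -
  have "(normD D v)\<^sup>2 \<le> norm v * (norm v * b)"
    using norm_cauchy_schwarz[of v "D *v v"] assms(2)[of v]
    by (simp add: normD_square[OF assms(1)]) (meson mult_left_mono norm_ge_zero order_trans)
  then have "normD D v \<le> sqrt (b * (norm v)\<^sup>2)"
    by (simp add: real_le_rsqrt power2_eq_square mult_ac)
  then show ?thesis by (simp add: real_sqrt_mult)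
qed

lemma norm_matrix_vector_mult_lower_bound:
  fixes D :: "real^'n^'n"
  assumes "a > 0" "\<And>v. a * (norm v)\<^sup>2 \<le> v \<bullet> (D *v v)"
  shows "a * norm v \<le> norm (D *v v)"
proof (cases "v = 0")
  case False
  have "a * norm v * norm v \<le> norm v * norm (D *v v)"
    using assms(2)[of v] norm_cauchy_schwarz[of v "D *v v"] by (simp add: power2_eq_square)
  then show ?thesis using False by (simp add: mult.commute)
qed simp

lemma H_coerc_imp_quadratic_growth:
  fixes gradV :: "real^'n \<Rightarrow> real^'n"
  assumes "H_coerc gradV"
  obtains R c where "R > 0" "c > 0" "\<And>u. R \<le> norm u \<Longrightarrow> c * (norm u)\<^sup>2 \<le> u \<bullet> gradV u"
proof -
  obtain L :: ereal where L: "L > 0"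
    "((\<lambda>R. INF u\<in>{u. norm u \<ge> R}. ereal (u \<bullet> gradV u / (norm u)\<^sup>2)) \<longlongrightarrow> L) at_top"
    using assms unfolding H_coerc_def by blast
  obtain c where c: "0 < ereal c" "ereal c < L" using ereal_dense2[OF L(1)] by blast
  obtain N where N: "\<And>R. R \<ge> N \<Longrightarrow>
      ereal c < (INF u\<in>{u. norm u \<ge> R}. ereal (u \<bullet> gradV u / (norm u)\<^sup>2))"
    using order_tendstoD(1)[OF L(2) c(2)] unfolding eventually_at_top_linorder by blast
  define R where "R = max N 1"
  have "c * (norm u)\<^sup>2 \<le> u \<bullet> gradV u" if u: "R \<le> norm u" for u
  proof -
    have "ereal c < (INF u\<in>{u. norm u \<ge> R}. ereal (u \<bullet> gradV u / (norm u)\<^sup>2))"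
      using N[of R] R_def by simp
    also have "\<dots> \<le> ereal (u \<bullet> gradV u / (norm u)\<^sup>2)" by (rule INF_lower) (use u in simp)
    finally have "c < u \<bullet> gradV u / (norm u)\<^sup>2" by simp
    moreover have "norm u > 0" using u R_def by linarith
    ultimately show ?thesis by (simp add: field_simps)
  qed
  moreover have "R > 0" "c > 0" using c(1) by (auto simp: R_def)
  ultimately show thesis using that by blast
qed

lemma radial_growth:
  fixes V :: "'a::real_inner \<Rightarrow> real"
  assumes V': "\<And>q. (V has_derivative (\<lambda>h. gradV q \<bullet> h)) (at q)"
    and growth: "\<And>u. R \<le> norm u \<Longrightarrow> c * (norm u)\<^sup>2 \<le> u \<bullet> gradV u"
    and "R > 0" "c \<ge> 0" "norm e = 1" "R \<le> t"
  shows "V (R *\<^sub>R e) + c * R * (t - R) \<le> V (t *\<^sub>R e)"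
proof -
  have "(\<lambda>s. V (s *\<^sub>R e) - c * R * s) R \<le> (\<lambda>s. V (s *\<^sub>R e) - c * R * s) t"
  proof (rule DERIV_nonneg_imp_nondecreasing[OF \<open>R \<le> t\<close>])
    fix s assume s: "R \<le> s" "s \<le> t"
    have "((\<lambda>s. V (s *\<^sub>R e) - c * R * s) has_real_derivative gradV (s *\<^sub>R e) \<bullet> e - c * R) (at s)"
      unfolding has_field_derivative_def
      by (rule has_derivative_eq_rhs, rule has_derivative_diff[OF has_derivative_compose[OF _ V']])
        (auto intro!: derivative_eq_intros simp: fun_eq_iff algebra_simps)
    moreover have "c * R \<le> gradV (s *\<^sub>R e) \<bullet> e"
    proof -
      have "c * s\<^sup>2 \<le> s * (gradV (s *\<^sub>R e) \<bullet> e)"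
        using growth[of "s *\<^sub>R e"] s \<open>R > 0\<close> \<open>norm e = 1\<close> by (simp add: inner_commute)
      then have "c * s \<le> gradV (s *\<^sub>R e) \<bullet> e"
        using s \<open>R > 0\<close> by (simp add: power2_eq_square mult.assoc mult.left_commute[of c])
      moreover have "c * R \<le> c * s" using s \<open>c \<ge> 0\<close> by (simp add: mult_left_mono)
      ultimately show ?thesis by linarith
    qed
    ultimately show "\<exists>y. ((\<lambda>s. V (s *\<^sub>R e) - c * R * s) has_real_derivative y) (at s) \<and> 0 \<le> y"
      by force
  qed
  then show ?thesis by (simp add: algebra_simps)
qed

lemma bounded_sublevel_of_growth:
  fixes V :: "'a::euclidean_space \<Rightarrow> real"
  assumes V': "\<And>q. (V has_derivative (\<lambda>h. gradV q \<bullet> h)) (at q)"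
    and growth: "\<And>u. R \<le> norm u \<Longrightarrow> c * (norm u)\<^sup>2 \<le> u \<bullet> gradV u"
    and "R > 0" "c > 0"
  shows "bounded {q. V q \<le> r}"
proof -
  have "continuous_on (cball 0 R) V"
    using V' has_derivative_continuous continuous_at_imp_continuous_on by blast
  then obtain m where m: "\<And>q. q \<in> cball 0 R \<Longrightarrow> m \<le> V q"
    using continuous_attains_inf[OF compact_cball, of 0 R V] \<open>R > 0\<close> by fastforce
  have "norm q \<le> R + \<bar>r - m\<bar> / (c * R)" if "V q \<le> r" for q
  proof (cases "norm q \<le> R")
    case False
    define e where "e = q /\<^sub>R norm q"
    have "norm q > 0" using False \<open>R > 0\<close> by linarith
    then have q: "norm e = 1" "q = norm q *\<^sub>R e" by (auto simp: e_def)
    have "m + c * R * (norm q - R) \<le> V q"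
      using radial_growth[OF V' growth \<open>R > 0\<close> _ q(1), of "norm q"] m[of "R *\<^sub>R e"]
        q False \<open>c > 0\<close> \<open>R > 0\<close>
      by simp
    then have "c * R * (norm q - R) \<le> \<bar>r - m\<bar>" using that by linarith
    then show ?thesis using \<open>R > 0\<close> \<open>c > 0\<close> by (simp add: field_simps)
  next
    case True
    then show ?thesis using \<open>R > 0\<close> \<open>c > 0\<close> by (smt (verit) divide_nonneg_pos mult_pos_pos)
  qed
  then show ?thesis unfolding bounded_iff by blast
qed

lemma compact_small_value_near_zero:
  fixes f :: "'a::metric_space \<Rightarrow> 'b::real_normed_vector"
  assumes "compact K" "continuous_on K f" "\<eta> > 0"
  obtains \<epsilon> where "\<epsilon> > 0"
    "\<And>q. q \<in> K \<Longrightarrow> norm (f q) < \<epsilon> \<Longrightarrow> \<exists>m\<in>K. f m = 0 \<and> dist q m < \<eta>"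
proof -
  define S where "S = K \<inter> (\<Inter>m\<in>{m\<in>K. f m = 0}. {q. \<eta> \<le> dist q m})"
  have "compact S"
    unfolding S_def
    by (intro compact_Int_closed assms closed_INT ballI closed_Collect_le continuous_intros)
  have far: "\<exists>m\<in>K. f m = 0 \<and> dist q m < \<eta>" if "q \<in> K" "q \<notin> S" for q
    using that unfolding S_def by force
  show thesis
  proof (cases "S = {}")
    case True
    with far show thesis by (intro that[of 1]) auto
  next
    case False
    obtain q0 where q0: "q0 \<in> S" "\<And>q. q \<in> S \<Longrightarrow> norm (f q0) \<le> norm (f q)"
      using continuous_attains_inf[OF \<open>compact S\<close> False, of "\<lambda>q. norm (f q)"]
        continuous_on_subset[OF assms(2)] by (force simp: S_def intro: continuous_on_norm)
    have "f q0 \<noteq> 0"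
      using q0(1) \<open>\<eta> > 0\<close> unfolding S_def by force
    then show thesis
      using far q0(2) by (intro that[of "norm (f q0)"]) force+
  qed
qed

lemma oscillation_le_energy:
  fixes u w :: "real \<Rightarrow> 'a::banach"
  assumes u': "\<And>x. x \<in> {s..t} \<Longrightarrow> (u has_vector_derivative w x) (at x within {s..t})"
    and w: "continuous_on {s..t} w" and "\<rho> > 0" and "x \<in> {s..t}" "y \<in> {s..t}"
  shows "2 * \<rho> * norm (u y - u x) \<le> integral {s..t} (\<lambda>x. (norm (w x))\<^sup>2) + (t - s) * \<rho>\<^sup>2"
proof -
  have int: "(\<lambda>x. norm (w x)) integrable_on {s..t}" "(\<lambda>x. (norm (w x))\<^sup>2) integrable_on {s..t}"
    by (auto intro!: integrable_continuous_interval continuous_intros w)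
  have "norm (u y - u x) \<le> integral {s..t} (\<lambda>x. norm (w x))"
    if "x \<in> {s..t}" "y \<in> {s..t}" "x \<le> y" for x y
  proof -
    have sub: "{x..y} \<subseteq> {s..t}" using that by auto
    have "(w has_integral (u y - u x)) {x..y}"
      using that by (intro fundamental_theorem_of_calculus)
        (auto intro: has_vector_derivative_within_subset[OF u' sub])
    then have "norm (u y - u x) \<le> integral {x..y} (\<lambda>x. norm (w x))"
      by (metis integral_norm_bound_integral integral_unique has_integral_integrable
          integrable_on_subinterval int(1) sub order_refl)
    also have "\<dots> \<le> integral {s..t} (\<lambda>x. norm (w x))"
      by (intro integral_subset_le sub int integrable_on_subinterval[OF int(1) sub]) auto
    finally show ?thesis .
  qed
  then have osc: "norm (u y - u x) \<le> integral {s..t} (\<lambda>x. norm (w x))"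
    using assms(4,5) by (metis linorder_le_cases norm_minus_commute)
  have "2 * \<rho> * norm (u y - u x) \<le> integral {s..t} (\<lambda>x. 2 * \<rho> * norm (w x))"
    using osc \<open>\<rho> > 0\<close> by simp
  also have "\<dots> \<le> integral {s..t} (\<lambda>x. (norm (w x))\<^sup>2 + \<rho>\<^sup>2)"
    using sum_squares_ge_zero[of "norm (w _) - \<rho>" 0]
    by (intro integral_le integrable_continuous_interval continuous_intros w)
      (auto simp: power2_eq_square algebra_simps)
  also have "\<dots> = integral {s..t} (\<lambda>x. (norm (w x))\<^sup>2) + (t - s) * \<rho>\<^sup>2"
    using assms(4) by (subst integral_add[OF int(2) integrable_const_ivl]) (simp add: content_real)
  finally show ?thesis .
qed

lemma integral_lt_imp_exists_lt:
  fixes f :: "real \<Rightarrow> real"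
  assumes "f integrable_on {s..t}" "s \<le> t" "integral {s..t} f < c * (t - s)"
  obtains x where "x \<in> {s..t}" "f x < c"
proof (rule ccontr)
  assume "\<not> thesis"
  then have "integral {s..t} (\<lambda>x. c) \<le> integral {s..t} f"
    using that by (intro integral_le assms(1)) force+
  with assms show False by (simp add: content_real mult.commute)
qed

lemma derivative_le_of_small_oscillation:
  fixes w :: "real \<Rightarrow> 'a::real_normed_vector"
  assumes w': "\<And>t. t \<in> {s..r} \<Longrightarrow> (w has_vector_derivative w' t) (at t within {s..r})"
    and "x \<in> {s..r}" and osc: "\<And>t. t \<in> {s..r} \<Longrightarrow> norm (w' t - w' x) \<le> e"
  shows "(r - s) * norm (w' x) \<le> norm (w r) + norm (w s) + (r - s) * e"
proof -
  have "norm (w r - w s - (r - s) *\<^sub>R w' x) \<le> norm (r - s) * e"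
  proof (rule differentiable_bound_linearization[where f' = "\<lambda>t h. h *\<^sub>R w' t" and S = "{s..r}"])
    show "(w has_derivative (\<lambda>h. h *\<^sub>R w' t)) (at t within {s..r})" if "t \<in> {s..r}" for t
      using w'[OF that] by (simp add: has_vector_derivative_def)
    show "onorm ((\<lambda>h. h *\<^sub>R w' t) - (\<lambda>h. h *\<^sub>R w' x)) \<le> e" if "t \<in> {s..r}" for t
    proof -
      have "(\<lambda>h::real. h *\<^sub>R w' t) - (\<lambda>h. h *\<^sub>R w' x) = (\<lambda>h. h *\<^sub>R (w' t - w' x))"
        by (simp add: fun_eq_iff scaleR_diff_right)
      then show ?thesis
        using onorm_scaleR_left[OF bounded_linear_ident, of "w' t - w' x"] osc[OF that]
        by (simp add: onorm_id)
    qed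
    show "s + t *\<^sub>R (r - s) \<in> {s..r}" if "t \<in> {0..1}" for t
      using that assms(2) mult_left_le_one_le[of "r - s" t] by auto
  qed (use assms(2) in auto)
  moreover have "norm ((r - s) *\<^sub>R w' x) \<le> norm (w r - w s) + norm (w r - w s - (r - s) *\<^sub>R w' x)"
    using norm_triangle_ineq4[of "w r - w s" "w r - w s - (r - s) *\<^sub>R w' x"] by simp
  moreover have "norm (w r - w s) \<le> norm (w r) + norm (w s)" by (rule norm_triangle_ineq4)
  ultimately have "norm ((r - s) *\<^sub>R w' x) \<le> norm (w r) + norm (w s) + (r - s) * e"
    using assms(2) by simp
  then show ?thesis using assms(2) by simp
qed

definition solves_newton :: "real^'n^'n \<Rightarrow> (real^'n \<Rightarrow> real^'n) \<Rightarrow>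
    (real \<Rightarrow> real^'n) \<Rightarrow> (real \<Rightarrow> real^'n) \<Rightarrow> (real \<Rightarrow> real^'n) \<Rightarrow> bool"
  where "solves_newton D gradV u u' u'' \<longleftrightarrow>
    (\<forall>x. (u has_vector_derivative u' x) (at x)) \<and> (\<forall>x. (u' has_vector_derivative u'' x) (at x)) \<and>
    (\<forall>x. D *v u'' x = gradV (u x))"

definition hamiltonian :: "real^'n^'n \<Rightarrow> (real^'n \<Rightarrow> real) \<Rightarrow>
    (real \<Rightarrow> real^'n) \<Rightarrow> (real \<Rightarrow> real^'n) \<Rightarrow> real \<Rightarrow> real"
  where "hamiltonian D V u u' x = (normD D (u' x))\<^sup>2 / 2 - V (u x)"

definition lagrangian :: "real^'n^'n \<Rightarrow> (real^'n \<Rightarrow> real) \<Rightarrow>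
    (real \<Rightarrow> real^'n) \<Rightarrow> (real \<Rightarrow> real^'n) \<Rightarrow> real \<Rightarrow> real"
  where "lagrangian D V u u' x = (normD D (u' x))\<^sup>2 / 2 + V (u x)"

lemma solves_newton_continuous:
  assumes "solves_newton D gradV u u' u''"
  shows "continuous_on S u" "continuous_on S u'"
  using assms unfolding solves_newton_def
  by (meson continuous_at_imp_continuous_on has_vector_derivative_continuous)+

lemma small_action_oscillation:
  fixes D :: "real^'n^'n"
  assumes D: "pos_def_mat D" "a > 0" "\<And>v. a * (norm v)\<^sup>2 \<le> v \<bullet> (D *v v)"
    and sol: "solves_newton D gradV u u' u''" and V: "continuous_on UNIV V"
    and ham: "\<And>x. \<bar>hamiltonian D V u u' x\<bar> \<le> \<delta>"
    and act: "integral {x0..x0+1} (lagrangian D V u u') < \<delta>"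
    and "\<rho> > 0" "2 * \<delta> \<le> a * \<rho>\<^sup>2"
  shows "\<forall>x\<in>{x0..x0+1}. \<forall>y\<in>{x0..x0+1}. norm (u y - u x) \<le> \<rho>"
    and "\<exists>x1\<in>{x0..x0+1}. V (u x1) < \<delta>"
proof -
  have "continuous_on {x0..x0+1} (lagrangian D V u u')"
    unfolding lagrangian_def using solves_newton_continuous[OF sol]
    by (intro continuous_intros continuous_on_compose2[OF continuous_on_normD]
        continuous_on_compose2[OF V]) auto
  then have intL: "lagrangian D V u u' integrable_on {x0..x0+1}"
    by (rule integrable_continuous_interval)
  have "a * (norm (u' x))\<^sup>2 \<le> lagrangian D V u u' x + \<delta>" for x
    using D(3)[of "u' x"] ham[of x] normD_square[OF D(1), of "u' x"]
    by (simp add: hamiltonian_def lagrangian_def abs_le_iff)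
  then have "integral {x0..x0+1} (\<lambda>x. a * (norm (u' x))\<^sup>2)
      \<le> integral {x0..x0+1} (\<lambda>x. lagrangian D V u u' x + \<delta>)"
    using solves_newton_continuous[OF sol]
    by (intro integral_le integrable_add intL integrable_const_ivl integrable_continuous_interval
        continuous_intros) auto
  also have "\<dots> < a * \<rho>\<^sup>2"
    using act \<open>2 * \<delta> \<le> a * \<rho>\<^sup>2\<close>
    by (subst integral_add[OF intL integrable_const_ivl]) (simp add: content_real)
  finally have "integral {x0..x0+1} (\<lambda>x. (norm (u' x))\<^sup>2) \<le> \<rho>\<^sup>2"
    using \<open>a > 0\<close> by simp
  moreover have "\<And>x. (u has_vector_derivative u' x) (at x within {x0..x0+1})"
    using sol unfolding solves_newton_def by (blast intro: has_vector_derivative_at_within)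
  ultimately have "2 * \<rho> * norm (u y - u x) \<le> \<rho>\<^sup>2 + \<rho>\<^sup>2"
    if "x \<in> {x0..x0+1}" "y \<in> {x0..x0+1}" for x y
    using oscillation_le_energy[of x0 "x0+1" u u' \<rho> x y] solves_newton_continuous[OF sol]
      \<open>\<rho> > 0\<close> that
    by fastforce
  then show "\<forall>x\<in>{x0..x0+1}. \<forall>y\<in>{x0..x0+1}. norm (u y - u x) \<le> \<rho>"
    using \<open>\<rho> > 0\<close> by (simp add: power2_eq_square)
  obtain x1 where "x1 \<in> {x0..x0+1}" "lagrangian D V u u' x1 < \<delta>"
    using integral_lt_imp_exists_lt[OF intL, of \<delta>] act by auto
  moreover have "2 * V (u x1) - \<delta> \<le> lagrangian D V u u' x1"
    using ham[of x1] by (simp add: hamiltonian_def lagrangian_def abs_le_iff)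
  ultimately show "\<exists>x1\<in>{x0..x0+1}. V (u x1) < \<delta>" by force
qed

lemma hamiltonian_bounds:
  fixes D :: "real^'n^'n"
  assumes "pos_def_mat D" "\<And>v. a * (norm v)\<^sup>2 \<le> v \<bullet> (D *v v)"
    and "\<bar>hamiltonian D V u u' x\<bar> \<le> \<delta>"
  shows "a * (norm (u' x))\<^sup>2 \<le> 2 * (V (u x) + \<delta>)" and "- \<delta> \<le> V (u x)"
  using assms(2)[of "u' x"] assms(3) normD_square[OF assms(1), of "u' x"]
    zero_le_power2[of "normD D (u' x)"]
  by (auto simp: hamiltonian_def abs_le_iff)

lemma solves_newton_gradient_bound:
  fixes D :: "real^'n^'n"
  assumes sol: "solves_newton D gradV u u' u''"
    and D: "a > 0" "\<And>v. a * norm v \<le> norm (D *v v)" "b > 0" "\<And>v. norm (D *v v) \<le> norm v * b"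
    and "x \<in> {x0..x0+1}"
    and grad: "\<And>t. t \<in> {x0..x0+1} \<Longrightarrow> norm (gradV (u t) - gradV (u x)) \<le> a * e"
    and "norm (u' x0) \<le> e" "norm (u' (x0+1)) \<le> e"
  shows "norm (gradV (u x)) \<le> 3 * b * e"
proof -
  have "norm (u'' t - u'' x) \<le> e" if "t \<in> {x0..x0+1}" for t
  proof -
    have "a * norm (u'' t - u'' x) \<le> norm (gradV (u t) - gradV (u x))"
      using D(2)[of "u'' t - u'' x"] sol
      by (simp add: solves_newton_def matrix_vector_mult_diff_distrib)
    then show ?thesis using grad[OF that] \<open>a > 0\<close> by (meson mult_le_cancel_left_pos order_trans)
  qed
  moreover have "\<And>t. (u' has_vector_derivative u'' t) (at t within {x0..x0+1})"
    using sol unfolding solves_newton_def by (blast intro: has_vector_derivative_at_within)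
  ultimately have "norm (u'' x) \<le> norm (u' (x0+1)) + norm (u' x0) + e"
    using derivative_le_of_small_oscillation[of x0 "x0+1" u' u'' x e] assms(6) by simp
  then have "norm (u'' x) \<le> 3 * e" using assms(8,9) by linarith
  then show ?thesis
    using D(4)[of "u'' x"] sol \<open>b > 0\<close> unfolding solves_newton_def
    by (metis mult.commute mult.assoc mult_left_mono less_imp_le order_trans)
qed

lemma small_action_bounds:
  fixes D :: "real^'n^'n" and V :: "real^'n \<Rightarrow> real"
  assumes D: "pos_def_mat D" "a > 0" "\<And>v. a * (norm v)\<^sup>2 \<le> v \<bullet> (D *v v)"
      "b > 0" "\<And>v. norm (D *v v) \<le> norm v * b"
    and cV: "continuous_on UNIV V" and R1: "\<And>q. V q \<le> 1 \<Longrightarrow> norm q \<le> R1"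
    and modV: "\<And>q q'. q \<in> cball 0 (R1 + 1) \<Longrightarrow> q' \<in> cball 0 (R1 + 1) \<Longrightarrow> dist q' q \<le> \<rho> \<Longrightarrow>
        \<bar>V q' - V q\<bar> < \<tau>"
    and modG: "\<And>q q'. q \<in> cball 0 (R1 + 1) \<Longrightarrow> q' \<in> cball 0 (R1 + 1) \<Longrightarrow> dist q' q \<le> \<rho> \<Longrightarrow>
        norm (gradV q' - gradV q) \<le> a * e"
    and sol: "solves_newton D gradV u u' u''" and ham: "\<And>x. \<bar>hamiltonian D V u u' x\<bar> \<le> \<delta>"
    and act: "integral {x0..x0+1} (lagrangian D V u u') < \<delta>" and x: "x \<in> {x0..x0+1}"
    and \<rho>: "\<rho> > 0" "\<rho> \<le> 1" and \<delta>: "2 * \<delta> \<le> a * \<rho>\<^sup>2" "\<delta> \<le> 1" "4 * \<delta> + 2 * \<tau> \<le> a * e\<^sup>2"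
    and "e \<ge> 0"
  shows "u x \<in> cball 0 (R1 + 1)" "- \<delta> \<le> V (u x)" "V (u x) < \<delta> + \<tau>"
    "norm (gradV (u x)) \<le> 3 * b * e"
proof -
  have osc: "\<And>t s. t \<in> {x0..x0+1} \<Longrightarrow> s \<in> {x0..x0+1} \<Longrightarrow> dist (u t) (u s) \<le> \<rho>"
    using small_action_oscillation[OF D(1-3) sol cV ham act \<rho>(1) \<delta>(1)]
    by (simp add: dist_norm)
  obtain x1 where x1: "x1 \<in> {x0..x0+1}" "V (u x1) < \<delta>"
    using small_action_oscillation[OF D(1-3) sol cV ham act \<rho>(1) \<delta>(1)] by blast
  have inK: "u t \<in> cball 0 (R1 + 1)" if "t \<in> {x0..x0+1}" for t
    using R1[of "u x1"] x1 \<delta>(2) osc[OF that x1(1)] \<rho>(2) norm_triangle_ineq2[of "u t" "u x1"]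
    by (simp add: dist_norm)
  have Vup: "V (u t) < \<delta> + \<tau>" if "t \<in> {x0..x0+1}" for t
    using modV[OF inK[OF x1(1)] inK[OF that] osc[OF that x1(1)]] x1(2) by linarith
  have u'_small: "norm (u' t) \<le> e" if "t \<in> {x0..x0+1}" for t
  proof -
    have "a * (norm (u' t))\<^sup>2 < a * e\<^sup>2"
      using hamiltonian_bounds(1)[OF D(1,3) ham, of t] Vup[OF that] \<delta>(3) by argo
    then show ?thesis using \<open>a > 0\<close> \<open>e \<ge> 0\<close> by (simp add: power_less_imp_less_base less_imp_le)
  qed
  show "norm (gradV (u x)) \<le> 3 * b * e"
    using solves_newton_gradient_bound[OF sol \<open>a > 0\<close> norm_matrix_vector_mult_lower_bound[OF D(2,3)]
        D(4,5) x modG[OF inK[OF x] inK osc[OF _ x]] u'_small[of x0] u'_small[of "x0+1"]]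
    by simp
  show "u x \<in> cball 0 (R1 + 1)" "- \<delta> \<le> V (u x)" "V (u x) < \<delta> + \<tau>"
    using inK[OF x] hamiltonian_bounds(2)[OF D(1,3) ham] Vup[OF x] by auto
qed

lemma small_action_small_potential_and_gradient:
  fixes D :: "real^'n^'n" and V :: "real^'n \<Rightarrow> real"
  assumes D: "pos_def_mat D" and cV: "continuous_on UNIV V" and cG: "continuous_on UNIV gradV"
    and R1: "\<And>q. V q \<le> 1 \<Longrightarrow> norm q \<le> R1" and "\<epsilon> > 0"
  obtains \<delta> where "\<delta> > 0"
    "\<And>u u' u'' x0 x. solves_newton D gradV u u' u'' \<Longrightarrow> (\<And>x. \<bar>hamiltonian D V u u' x\<bar> \<le> \<delta>) \<Longrightarrow>
       integral {x0..x0+1} (lagrangian D V u u') < \<delta> \<Longrightarrow> x \<in> {x0..x0+1} \<Longrightarrow>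
       u x \<in> cball 0 (R1 + 1) \<and> \<bar>V (u x)\<bar> < \<epsilon> \<and> norm (gradV (u x)) < \<epsilon>"
proof -
  obtain a where a: "a > 0" "\<And>v. a * (norm v)\<^sup>2 \<le> v \<bullet> (D *v v)"
    using quadratic_form_lower_bound[OF D] by blast
  obtain b where b: "b > 0" "\<And>v. norm (D *v v) \<le> norm v * b"
    using bounded_linear.pos_bounded[OF matrix_vector_mul_bounded_linear[of D]] by blast
  define e where "e = \<epsilon> / (4 * b)"
  define \<tau> where "\<tau> = min (\<epsilon> / 2) (a * e\<^sup>2 / 4)"
  have "e > 0" "\<tau> > 0" using \<open>\<epsilon> > 0\<close> a(1) b(1) by (auto simp: e_def \<tau>_def)
  have "uniformly_continuous_on (cball 0 (R1 + 1)) V"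
    by (rule compact_uniformly_continuous[OF continuous_on_subset[OF cV]]) auto
  then obtain \<rho>V where "\<rho>V > 0" and \<rho>V: "\<And>q q'. q \<in> cball 0 (R1 + 1) \<Longrightarrow> q' \<in> cball 0 (R1 + 1) \<Longrightarrow>
      dist q' q < \<rho>V \<Longrightarrow> dist (V q') (V q) < \<tau>"
    using \<open>\<tau> > 0\<close> unfolding uniformly_continuous_on_def by blast
  have "uniformly_continuous_on (cball 0 (R1 + 1)) gradV"
    by (rule compact_uniformly_continuous[OF continuous_on_subset[OF cG]]) auto
  moreover have "a * e > 0" using \<open>e > 0\<close> a(1) by simp
  ultimately obtain \<rho>G where "\<rho>G > 0" and \<rho>G: "\<And>q q'. q \<in> cball 0 (R1 + 1) \<Longrightarrow> q' \<in> cball 0 (R1 + 1) \<Longrightarrow>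
      dist q' q < \<rho>G \<Longrightarrow> dist (gradV q') (gradV q) < a * e"
    unfolding uniformly_continuous_on_def by blast
  define \<rho> where "\<rho> = min 1 (min \<rho>V \<rho>G) / 2"
  have \<rho>: "\<rho> > 0" "\<rho> \<le> 1" "\<rho> < \<rho>V" "\<rho> < \<rho>G" using \<open>\<rho>V > 0\<close> \<open>\<rho>G > 0\<close> by (auto simp: \<rho>_def)
  have modV: "\<bar>V q' - V q\<bar> < \<tau>"
    if "q \<in> cball 0 (R1 + 1)" "q' \<in> cball 0 (R1 + 1)" "dist q' q \<le> \<rho>" for q q'
    using \<rho>V[OF that(1,2)] that(3) \<rho>(3) by (simp add: dist_real_def)
  have modG: "norm (gradV q' - gradV q) \<le> a * e"
    if "q \<in> cball 0 (R1 + 1)" "q' \<in> cball 0 (R1 + 1)" "dist q' q \<le> \<rho>" for q q'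
    using \<rho>G[OF that(1,2)] that(3) \<rho>(4) by (simp add: dist_norm)
  define \<delta> where "\<delta> = min 1 (min (\<tau> / 4) (a * \<rho>\<^sup>2 / 2))"
  have \<delta>: "\<delta> > 0" "2 * \<delta> \<le> a * \<rho>\<^sup>2" "\<delta> \<le> 1" "4 * \<delta> + 2 * \<tau> \<le> a * e\<^sup>2" "\<delta> + \<tau> < \<epsilon>"
    using \<open>\<tau> > 0\<close> a(1) \<rho>(1) \<open>\<epsilon> > 0\<close> by (auto simp: \<delta>_def \<tau>_def)
  show thesis
  proof (rule that[OF \<delta>(1)])
    fix u u' u'' x0 x
    assume "solves_newton D gradV u u' u''" "\<And>x. \<bar>hamiltonian D V u u' x\<bar> \<le> \<delta>"
      "integral {x0..x0+1} (lagrangian D V u u') < \<delta>" "x \<in> {x0..x0+1}"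
    note bounds =
      small_action_bounds[OF D a b cV R1 modV modG this \<rho>(1,2) \<delta>(2-4) less_imp_le[OF \<open>e > 0\<close>]]
    then have "\<bar>V (u x)\<bar> < \<epsilon>" using \<delta>(5) \<open>\<tau> > 0\<close> by (simp add: abs_less_iff)
    with bounds show "u x \<in> cball 0 (R1 + 1) \<and> \<bar>V (u x)\<bar> < \<epsilon> \<and> norm (gradV (u x)) < \<epsilon>"
      using b(1) \<open>\<epsilon> > 0\<close> by (simp add: e_def)
  qed
qed

lemma small_action_near_critical_point:
  fixes D :: "real^'n^'n" and V :: "real^'n \<Rightarrow> real"
  assumes D: "pos_def_mat D"
    and V': "\<And>q. (V has_derivative (\<lambda>h. gradV q \<bullet> h)) (at q)" and cG: "continuous_on UNIV gradV"
    and coerc: "H_coerc gradV" and "\<eta> > 0"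
  obtains \<delta> where "\<delta> > 0"
    "\<And>u u' u'' x0 x. solves_newton D gradV u u' u'' \<Longrightarrow> (\<And>x. \<bar>hamiltonian D V u u' x\<bar> \<le> \<delta>) \<Longrightarrow>
       integral {x0..x0+1} (lagrangian D V u u') < \<delta> \<Longrightarrow> x \<in> {x0..x0+1} \<Longrightarrow>
       \<exists>m\<in>M0 V gradV. norm (u x - m) < \<eta>"
proof -
  have cV: "continuous_on UNIV V"
    using V' has_derivative_continuous continuous_at_imp_continuous_on by blast
  obtain R c where "R > 0" "c > 0" "\<And>u. R \<le> norm u \<Longrightarrow> c * (norm u)\<^sup>2 \<le> u \<bullet> gradV u"
    using H_coerc_imp_quadratic_growth[OF coerc] by blast
  then have "bounded {q. V q \<le> 1}" by (intro bounded_sublevel_of_growth[OF V'])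
  then obtain R1 where R1: "\<And>q. V q \<le> 1 \<Longrightarrow> norm q \<le> R1" unfolding bounded_iff by blast
  have "continuous_on (cball 0 (R1 + 1)) (\<lambda>q. (V q, gradV q))"
    using cV cG by (blast intro: continuous_on_Pair continuous_on_subset)
  then obtain \<epsilon> where "\<epsilon> > 0" and \<epsilon>: "\<And>q. q \<in> cball 0 (R1 + 1) \<Longrightarrow> norm (V q, gradV q) < \<epsilon> \<Longrightarrow>
      \<exists>m\<in>cball 0 (R1 + 1). (V m, gradV m) = 0 \<and> dist q m < \<eta>"
    using compact_small_value_near_zero[OF compact_cball _ \<open>\<eta> > 0\<close>] by blast
  obtain \<delta> where "\<delta> > 0" and \<delta>: "\<And>u u' u'' x0 x. solves_newton D gradV u u' u'' \<Longrightarrow>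
      (\<And>x. \<bar>hamiltonian D V u u' x\<bar> \<le> \<delta>) \<Longrightarrow> integral {x0..x0+1} (lagrangian D V u u') < \<delta> \<Longrightarrow>
      x \<in> {x0..x0+1} \<Longrightarrow> u x \<in> cball 0 (R1 + 1) \<and> \<bar>V (u x)\<bar> < \<epsilon> / 2 \<and> norm (gradV (u x)) < \<epsilon> / 2"
    using small_action_small_potential_and_gradient[OF D cV cG R1, of "\<epsilon> / 2"] \<open>\<epsilon> > 0\<close> by auto
  show thesis
  proof (rule that[OF \<open>\<delta> > 0\<close>])
    fix u u' u'' x0 x
    assume "solves_newton D gradV u u' u''" "\<And>x. \<bar>hamiltonian D V u u' x\<bar> \<le> \<delta>"
      "integral {x0..x0+1} (lagrangian D V u u') < \<delta>" "x \<in> {x0..x0+1}"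
    then have "u x \<in> cball 0 (R1 + 1)" "norm (V (u x), gradV (u x)) < \<epsilon>"
      using \<delta> norm_Pair_le[of "V (u x)" "gradV (u x)"] by fastforce+
    then obtain m where "V m = 0" "gradV m = 0" "dist (u x) m < \<eta>"
      using \<epsilon> by (auto simp: zero_prod_def)
    then show "\<exists>m\<in>M0 V gradV. norm (u x - m) < \<eta>"
      by (auto simp: M0_def dist_norm)
  qed
qed

lemma escape_forces_action:
  fixes D :: "real^'n^'n" and V :: "real^'n \<Rightarrow> real"
  assumes D: "pos_def_mat D"
    and V': "\<And>q. (V has_derivative (\<lambda>h. gradV q \<bullet> h)) (at q)" and cG: "continuous_on UNIV gradV"
    and coerc: "H_coerc gradV" and "dEsc > 0"
  obtains \<delta> where "\<delta> > 0"
    "\<And>u u' u'' x0 x. solves_newton D gradV u u' u'' \<Longrightarrow> (\<And>x. \<bar>hamiltonian D V u u' x\<bar> \<le> \<delta>) \<Longrightarrow>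
       x \<in> {x0..x0+1} \<Longrightarrow> x \<in> Sigma_Esc D V gradV dEsc u \<Longrightarrow>
       \<delta> \<le> integral {x0..x0+1} (lagrangian D V u u')"
proof -
  obtain b where "b > 0" and b: "\<And>v. norm (D *v v) \<le> norm v * b"
    using bounded_linear.pos_bounded[OF matrix_vector_mul_bounded_linear[of D]] by blast
  have "dEsc / sqrt b > 0" using \<open>dEsc > 0\<close> \<open>b > 0\<close> by simp
  then obtain \<delta> where "\<delta> > 0" and \<delta>: "\<And>u u' u'' x0 x. solves_newton D gradV u u' u'' \<Longrightarrow>
      (\<And>x. \<bar>hamiltonian D V u u' x\<bar> \<le> \<delta>) \<Longrightarrow> integral {x0..x0+1} (lagrangian D V u u') < \<delta> \<Longrightarrow>
      x \<in> {x0..x0+1} \<Longrightarrow> \<exists>m\<in>M0 V gradV. norm (u x - m) < dEsc / sqrt b"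
    using small_action_near_critical_point[OF D V' cG coerc] by blast
  show thesis
  proof (rule that[OF \<open>\<delta> > 0\<close>])
    fix u u' u'' x0 x
    assume sol: "solves_newton D gradV u u' u''" and ham: "\<And>x. \<bar>hamiltonian D V u u' x\<bar> \<le> \<delta>"
      and x: "x \<in> {x0..x0+1}" "x \<in> Sigma_Esc D V gradV dEsc u"
    show "\<delta> \<le> integral {x0..x0+1} (lagrangian D V u u')"
    proof (rule ccontr)
      assume "\<not> ?thesis"
      then obtain m where m: "m \<in> M0 V gradV" "norm (u x - m) < dEsc / sqrt b"
        using \<delta>[OF sol ham _ x(1)] by force
      then have "normD D (u x - m) < dEsc"
        using normD_le_norm[OF D b, of "u x - m"] \<open>b > 0\<close>
        by (simp add: pos_less_divide_eq mult.commute)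
      then show False using x(2) m(1) unfolding Sigma_Esc_def by fastforce
    qed
  qed
qed

theorem mainTheorem14:
  fixes D :: "real^'n^'n" and V :: "real^'n \<Rightarrow> real"
    and gradV :: "real^'n \<Rightarrow> real^'n" and HessV :: "real^'n \<Rightarrow> real^'n^'n"
    and dEsc :: real
  assumes "transpose D = D" and "pos_def_mat D"
    and "C2_with V gradV HessV"
    and "H_coerc gradV" and "H_norm V HessV" and "H_only_min V gradV HessV"
    and "d_Esc_ok D V gradV HessV dEsc"
  shows "\<exists>\<delta>Ham>0. \<exists>\<delta>Lag>0. \<forall>(u::real \<Rightarrow> real^'n) u' u''.
           (\<forall>x. (u has_vector_derivative u' x) (at x)) \<longrightarrow>
           (\<forall>x. (u' has_vector_derivative u'' x) (at x)) \<longrightarrow>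
           (\<forall>x. D *v u'' x = gradV (u x)) \<longrightarrow>
           (\<forall>x. \<bar>(normD D (u' x))\<^sup>2 / 2 - V (u x)\<bar> \<le> \<delta>Ham) \<longrightarrow>
           (\<forall>x0. {x0..x0+1} \<inter> Sigma_Esc D V gradV dEsc u \<noteq> {} \<longrightarrow>
              integral {x0..x0+1} (\<lambda>x. (normD D (u' x))\<^sup>2 / 2 + V (u x)) \<ge> \<delta>Lag)"
proof -
  have V': "\<And>q. (V has_derivative (\<lambda>h. gradV q \<bullet> h)) (at q)"
    and G': "\<And>q. (gradV has_derivative (\<lambda>h. HessV q *v h)) (at q)"
    using assms(3) unfolding C2_with_def by blast+
  have cG: "continuous_on UNIV gradV"
    using G' has_derivative_continuous continuous_at_imp_continuous_on by blast
  have "dEsc > 0" using assms(7) by (simp add: d_Esc_ok_def)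
  then obtain \<delta> where "\<delta> > 0" and \<delta>: "\<And>u u' u'' x0 x. solves_newton D gradV u u' u'' \<Longrightarrow>
      (\<And>x. \<bar>hamiltonian D V u u' x\<bar> \<le> \<delta>) \<Longrightarrow> x \<in> {x0..x0+1} \<Longrightarrow>
      x \<in> Sigma_Esc D V gradV dEsc u \<Longrightarrow> \<delta> \<le> integral {x0..x0+1} (lagrangian D V u u')"
    using escape_forces_action[OF assms(2) V' cG assms(4)] by blast
  show ?thesis
  proof (intro exI[of _ \<delta>] conjI allI impI \<open>\<delta> > 0\<close>)
    fix u u' u'' x0
    assume "\<forall>x. (u has_vector_derivative u' x) (at x)" "\<forall>x. (u' has_vector_derivative u'' x) (at x)"
      "\<forall>x. D *v u'' x = gradV (u x)" and ham: "\<forall>x. \<bar>(normD D (u' x))\<^sup>2 / 2 - V (u x)\<bar> \<le> \<delta>"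
      and "{x0..x0+1} \<inter> Sigma_Esc D V gradV dEsc u \<noteq> {}"
    then obtain x where "solves_newton D gradV u u' u''"
      and "x \<in> {x0..x0+1}" "x \<in> Sigma_Esc D V gradV dEsc u"
      unfolding solves_newton_def by blast
    with \<delta> ham show "\<delta> \<le> integral {x0..x0+1} (\<lambda>x. (normD D (u' x))\<^sup>2 / 2 + V (u x))"
      unfolding hamiltonian_def lagrangian_def by blast
  qed
qed

end
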